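(* With $p_n=\Psi(P_n)$, $m_n=\Psi(M_n)$, $o_n=\Psi(O_n)$ for $n\ge1$ and $p_0=m_0=o_0=1$, the following hold for all $n\ge 3$: (i) $p_n=5p_{n-1}-4p_{n-2}+4p_{n-3}$, with $p_0=1$, $p_1=5$, $p_2=25$; (ii) $m_n=6m_{n-1}-3m_{n-2}+2m_{n-3}$, with $m_0=1$, $m_1=5$, $m_2=25$; (iii) $o_n=4o_{n-1}+4o_{n-2}+o_{n-3}$, with $o_0=1$, $o_1=5$, $o_2=25$.
   Context: A matching of a graph is a set of pairwise vertex-disjoint edges; it is maximal if it is not a proper subset of another matching. $\Psi(G)$ is the number of maximal matchings of $G$. A chain hexagonal cactus is a connected graph all of whose blocks are 6-cycles (hexagons), in which each hexagon has at most two cut-vertices and each cut-vertex lies in exactly two hexagons; its length is its number of hexagons. An internal hexagon (one with two cut-vertices) is ortho, meta or para if its two cut-vertices are at distance 1, 2 or 3 in the hexagon. $P_n$, $M_n$, $O_n$ are the chain hexagonal cacti of length $n$ whose internal hexagons are all para, all meta, resp. all ortho. *)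

theory Defs
  imports Main
begin

text \<open>Simple graphs given by an edge set; each edge is a 2-element vertex set.\<close>

definition is_matching :: "'a set set \<Rightarrow> 'a set set \<Rightarrow> bool" where
  "is_matching E M \<longleftrightarrow> M \<subseteq> E \<and> (\<forall>e\<in>M. \<forall>f\<in>M. e \<noteq> f \<longrightarrow> e \<inter> f = {})"

definition is_maximal_matching :: "'a set set \<Rightarrow> 'a set set \<Rightarrow> bool" where
  "is_maximal_matching E M \<longleftrightarrow> is_matching E M \<and>
     (\<forall>M'. is_matching E M' \<and> M \<subseteq> M' \<longrightarrow> M' = M)"

definition num_max_matchings :: "'a set set \<Rightarrow> nat" where
  "num_max_matchings E = card {M. is_maximal_matching E M}"

text \<open>Chain hexagonal cactus of length n in which every internal hexagon has its two
  cut-vertices at cyclic distance d (d = 3 para, d = 2 meta, d = 1 ortho).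
  Hexagon i (i < n) has vertices at positions j = 0..5 around the cycle; vertex at
  position 0 of hexagon i+1 is identified with position d of hexagon i.\<close>
definition hex_vert :: "nat \<Rightarrow> nat \<Rightarrow> nat \<Rightarrow> nat \<times> nat" where
  "hex_vert d i j = (if j = 0 \<and> 0 < i then (i - 1, d) else (i, j))"

definition chain_cactus :: "nat \<Rightarrow> nat \<Rightarrow> (nat \<times> nat) set set" where
  "chain_cactus d n = {{hex_vert d i j, hex_vert d i ((j + 1) mod 6)} | i j. i < n \<and> j < 6}"

abbreviation para_chain :: "nat \<Rightarrow> (nat \<times> nat) set set" where
  "para_chain n \<equiv> chain_cactus 3 n"
abbreviation meta_chain :: "nat \<Rightarrow> (nat \<times> nat) set set" where
  "meta_chain n \<equiv> chain_cactus 2 n"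
abbreviation ortho_chain :: "nat \<Rightarrow> (nat \<times> nat) set set" where
  "ortho_chain n \<equiv> chain_cactus 1 n"

definition pseq :: "nat \<Rightarrow> int" where
  "pseq n = (if n = 0 then 1 else int (num_max_matchings (para_chain n)))"
definition mseq :: "nat \<Rightarrow> int" where
  "mseq n = (if n = 0 then 1 else int (num_max_matchings (meta_chain n)))"
definition oseq :: "nat \<Rightarrow> int" where
  "oseq n = (if n = 0 then 1 else int (num_max_matchings (ortho_chain n)))"

end

theory Submission
  imports Defs
begin

text \<open>Record a set of edges of a chain of n hexagons as n words of six booleans. Being a maximal
  matching is then a local condition: each hexagon carries a matching that dominates its own edges,
  given two flags saying whether its cut vertices are already covered by the neighbouring hexagons,
  and two consecutive hexagons never both cover their common cut vertex. Counting valid chains by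
  their boundary state gives a transfer-matrix recursion with only three reachable states; the
  order-3 recurrences are the characteristic polynomials of the three 3x3 transfer matrices, whose
  entries are found by enumerating all 64 words.\<close>

definition hex_edge :: "nat \<Rightarrow> nat \<Rightarrow> nat \<Rightarrow> (nat \<times> nat) set" where
  "hex_edge d i j = {hex_vert d i j, hex_vert d i ((j + 1) mod 6)}"

lemma chain_cactus_eq: "chain_cactus d n = {hex_edge d i j | i j. i < n \<and> j < 6}"
  by (simp add: chain_cactus_def hex_edge_def)

lemma hex_vert_eq_iff:
  assumes "d \<in> {1..5}" "p < 6" "p' < 6"
  shows "hex_vert d i p = hex_vert d i' p' \<longleftrightarrow>
    (i = i' \<and> p = p') \<or> (i' = Suc i \<and> p = d \<and> p' = 0) \<or> (i = Suc i' \<and> p = 0 \<and> p' = d)"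
  using assms by (auto simp: hex_vert_def split: if_splits)

definition hex_edges_touch :: "nat \<Rightarrow> nat \<Rightarrow> nat \<Rightarrow> nat \<Rightarrow> nat \<Rightarrow> bool" where
  "hex_edges_touch d i j i' j' \<longleftrightarrow>
     (i = i' \<and> (j' = j \<or> j' = (j + 1) mod 6 \<or> j = (j' + 1) mod 6))
   \<or> (i' = Suc i \<and> (j = d - 1 \<or> j = d) \<and> (j' = 5 \<or> j' = 0))
   \<or> (i = Suc i' \<and> (j' = d - 1 \<or> j' = d) \<and> (j = 5 \<or> j = 0))"

lemma hex_edges_meet_iff:
  assumes d: "d \<in> {1..5}" and j: "j < 6" and j': "j' < 6"
  shows "hex_edge d i j \<inter> hex_edge d i' j' \<noteq> {} \<longleftrightarrow> hex_edges_touch d i j i' j'"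
proof -
  have six: "x < 6 \<Longrightarrow> x \<in> {0, 1, 2, 3, 4, 5}" for x :: nat
    by auto
  have "hex_edge d i j \<inter> hex_edge d i' j' \<noteq> {} \<longleftrightarrow>
    (\<exists>p\<in>{j, (j + 1) mod 6}. \<exists>p'\<in>{j', (j' + 1) mod 6}. hex_vert d i p = hex_vert d i' p')"
    by (auto simp: hex_edge_def)
  also have "\<dots> \<longleftrightarrow> (\<exists>p\<in>{j, (j + 1) mod 6}. \<exists>p'\<in>{j', (j' + 1) mod 6}.
    (i = i' \<and> p = p') \<or> (i' = Suc i \<and> p = d \<and> p' = 0) \<or> (i = Suc i' \<and> p = 0 \<and> p' = d))"
    using d j j' by (simp add: hex_vert_eq_iff)
  also have "\<dots> \<longleftrightarrow> hex_edges_touch d i j i' j'"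
  proof -
    have all_cases: "\<forall>d\<in>{1, 2, 3, 4, 5}. \<forall>j\<in>{0, 1, 2, 3, 4, 5}. \<forall>j'\<in>{0, 1, 2, 3, 4, 5 :: nat}.
      (\<exists>p\<in>{j, (j + 1) mod 6}. \<exists>p'\<in>{j', (j' + 1) mod 6}.
        (i = i' \<and> p = p') \<or> (i' = Suc i \<and> p = d \<and> p' = 0) \<or> (i = Suc i' \<and> p = 0 \<and> p' = d))
      \<longleftrightarrow> hex_edges_touch d i j i' j'"
      by (simp add: hex_edges_touch_def) blast
    have "d \<in> {1, 2, 3, 4, 5}"
      using d by auto
    then show ?thesis
      by (rule all_cases[rule_format, OF _ six[OF j] six[OF j']])
  qed
  finally show ?thesis .
qed

lemma hex_edge_eq_iff:
  assumes d: "d \<in> {1..5}" and j: "j < 6" and j': "j' < 6"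
  shows "hex_edge d i j = hex_edge d i' j' \<longleftrightarrow> i = i' \<and> j = j'"
proof -
  let ?same = "\<lambda>p p'. (i = i' \<and> p = p') \<or> (i' = Suc i \<and> p = d \<and> p' = 0) \<or> (i = Suc i' \<and> p = 0 \<and> p' = d)"
  have six: "x < 6 \<Longrightarrow> x \<in> {0, 1, 2, 3, 4, 5}" for x :: nat
    by auto
  have "hex_edge d i j = hex_edge d i' j' \<longleftrightarrow>
    (hex_vert d i j = hex_vert d i' j' \<and> hex_vert d i ((j + 1) mod 6) = hex_vert d i' ((j' + 1) mod 6)) \<or>
    (hex_vert d i j = hex_vert d i' ((j' + 1) mod 6) \<and> hex_vert d i ((j + 1) mod 6) = hex_vert d i' j')"
    unfolding hex_edge_def by (rule doubleton_eq_iff)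
  also have "\<dots> \<longleftrightarrow> (?same j j' \<and> ?same ((j + 1) mod 6) ((j' + 1) mod 6)) \<or>
    (?same j ((j' + 1) mod 6) \<and> ?same ((j + 1) mod 6) j')"
    using d j j' by (simp add: hex_vert_eq_iff)
  also have "\<dots> \<longleftrightarrow> i = i' \<and> j = j'"
  proof -
    have all_cases: "\<forall>d\<in>{1, 2, 3, 4, 5}. \<forall>j\<in>{0, 1, 2, 3, 4, 5}. \<forall>j'\<in>{0, 1, 2, 3, 4, 5 :: nat}.
      (let same = (\<lambda>p p'. (i = i' \<and> p = p') \<or> (i' = Suc i \<and> p = d \<and> p' = 0) \<or> (i = Suc i' \<and> p = 0 \<and> p' = d))
       in (same j j' \<and> same ((j + 1) mod 6) ((j' + 1) mod 6)) \<or> (same j ((j' + 1) mod 6) \<and> same ((j + 1) mod 6) j'))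
      \<longleftrightarrow> i = i' \<and> j = j'"
      by (simp add: Let_def) (auto 0 0)
    have "d \<in> {1, 2, 3, 4, 5}"
      using d by auto
    then show ?thesis
      by (rule all_cases[unfolded Let_def, rule_format, OF _ six[OF j] six[OF j']])
  qed
  finally show ?thesis .
qed

lemma is_maximal_matching_iff:
  "is_maximal_matching E M \<longleftrightarrow> is_matching E M \<and> (\<forall>e\<in>E - M. \<exists>f\<in>M. e \<inter> f \<noteq> {})"
proof
  assume max: "is_maximal_matching E M"
  then have matching: "is_matching E M"
    unfolding is_maximal_matching_def by blast
  have "\<exists>f\<in>M. e \<inter> f \<noteq> {}" if e: "e \<in> E - M" for e
  proof (rule ccontr)
    assume "\<not> (\<exists>f\<in>M. e \<inter> f \<noteq> {})"
    then have "is_matching E (insert e M)"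
      using matching e unfolding is_matching_def by blast
    then have "insert e M = M"
      using max unfolding is_maximal_matching_def by (meson subset_insertI)
    then show False
      using e by blast
  qed
  with matching show "is_matching E M \<and> (\<forall>e\<in>E - M. \<exists>f\<in>M. e \<inter> f \<noteq> {})"
    by blast
next
  assume "is_matching E M \<and> (\<forall>e\<in>E - M. \<exists>f\<in>M. e \<inter> f \<noteq> {})"
  then have matching: "is_matching E M" and dominating: "\<forall>e\<in>E - M. \<exists>f\<in>M. e \<inter> f \<noteq> {}"
    by blast+
  have "M' = M" if M': "is_matching E M'" and sub: "M \<subseteq> M'" for M'
  proof (rule ccontr)
    assume "M' \<noteq> M"
    then obtain e where e: "e \<in> M'" "e \<notin> M"
      using sub by blast
    moreover have "e \<in> E"
      using M' e unfolding is_matching_def by blast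
    ultimately obtain f where f: "f \<in> M" "e \<inter> f \<noteq> {}"
      using dominating by blast
    then have "e \<noteq> f" "f \<in> M'"
      using e sub by auto
    then show False
      using e f M' unfolding is_matching_def by blast
  qed
  with matching show "is_maximal_matching E M"
    unfolding is_maximal_matching_def by blast
qed

definition hexagon_words :: "bool list set" where
  "hexagon_words = {w. length w = 6}"

definition selections :: "nat \<Rightarrow> bool list list set" where
  "selections n = {ws. length ws = n \<and> set ws \<subseteq> hexagon_words}"

definition selected_edges :: "nat \<Rightarrow> bool list list \<Rightarrow> (nat \<times> nat) set set" where
  "selected_edges d ws = {hex_edge d i j | i j. i < length ws \<and> j < 6 \<and> ws ! i ! j}"

definition selection_of :: "nat \<Rightarrow> nat \<Rightarrow> (nat \<times> nat) set set \<Rightarrow> bool list list" where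
  "selection_of d n M = map (\<lambda>i. map (\<lambda>j. hex_edge d i j \<in> M) [0..<6]) [0..<n]"

lemma finite_hexagon_words: "finite hexagon_words"
  using finite_lists_length_eq[of "UNIV :: bool set" 6] by (simp add: hexagon_words_def)

lemma finite_selections: "finite (selections n)"
  using finite_lists_length_eq[OF finite_hexagon_words, of n]
  unfolding selections_def conj_commute[of "length _ = n"] .

lemma hex_edge_in_selected_edges_iff:
  assumes "d \<in> {1..5}" "i < length ws" "j < 6"
  shows "hex_edge d i j \<in> selected_edges d ws \<longleftrightarrow> ws ! i ! j"
proof
  assume "hex_edge d i j \<in> selected_edges d ws"
  then obtain i' j' where "hex_edge d i j = hex_edge d i' j'" "j' < 6" "ws ! i' ! j'"
    unfolding selected_edges_def by blast
  with assms show "ws ! i ! j"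
    using hex_edge_eq_iff by metis
qed (use assms in \<open>auto simp: selected_edges_def\<close>)

lemma bij_betw_selected_edges:
  assumes d: "d \<in> {1..5}"
  shows "bij_betw (selected_edges d) (selections n) (Pow (chain_cactus d n))"
proof (rule bij_betw_byWitness[where f' = "selection_of d n"])
  show "\<forall>ws\<in>selections n. selection_of d n (selected_edges d ws) = ws"
  proof
    fix ws assume ws: "ws \<in> selections n"
    then have "length (ws ! i) = 6" if "i < n" for i
      using that nth_mem[of i ws] by (force simp: selections_def hexagon_words_def)
    with ws show "selection_of d n (selected_edges d ws) = ws"
      by (auto simp: selections_def selection_of_def hex_edge_in_selected_edges_iff[OF d]
          intro!: nth_equalityI)
  qed
  show "\<forall>M\<in>Pow (chain_cactus d n). selected_edges d (selection_of d n M) = M"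
  proof (intro ballI subset_antisym subsetI)
    fix M e assume "M \<in> Pow (chain_cactus d n)" "e \<in> M"
    then obtain i j where "e = hex_edge d i j" "i < n" "j < 6"
      unfolding chain_cactus_eq by blast
    with \<open>e \<in> M\<close> show "e \<in> selected_edges d (selection_of d n M)"
      unfolding selected_edges_def selection_of_def by force
  qed (auto simp: selected_edges_def selection_of_def)
  show "selected_edges d ` selections n \<subseteq> Pow (chain_cactus d n)"
    by (auto simp: selected_edges_def selections_def chain_cactus_eq)
  show "selection_of d n ` Pow (chain_cactus d n) \<subseteq> selections n"
    by (auto simp: selection_of_def selections_def hexagon_words_def)
qed

definition independent_selection :: "nat \<Rightarrow> bool list list \<Rightarrow> bool" where
  "independent_selection d ws \<longleftrightarrow> (\<forall>i<length ws. \<forall>j<6. \<forall>i'<length ws. \<forall>j'<6.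
     ws ! i ! j \<and> ws ! i' ! j' \<and> (i, j) \<noteq> (i', j') \<longrightarrow> \<not> hex_edges_touch d i j i' j')"

definition dominating_selection :: "nat \<Rightarrow> bool list list \<Rightarrow> bool" where
  "dominating_selection d ws \<longleftrightarrow> (\<forall>i<length ws. \<forall>j<6. \<not> ws ! i ! j \<longrightarrow>
     (\<exists>i'<length ws. \<exists>j'<6. ws ! i' ! j' \<and> hex_edges_touch d i j i' j'))"

lemma is_matching_selected_edges_iff:
  assumes d: "d \<in> {1..5}"
  shows "is_matching (chain_cactus d (length ws)) (selected_edges d ws) \<longleftrightarrow> independent_selection d ws"
proof
  assume "is_matching (chain_cactus d (length ws)) (selected_edges d ws)"
  then have disjoint: "e \<inter> f = {}"
    if "e \<in> selected_edges d ws" "f \<in> selected_edges d ws" "e \<noteq> f" for e f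
    using that unfolding is_matching_def by blast
  show "independent_selection d ws"
    unfolding independent_selection_def
  proof (intro allI impI)
    fix i j i' j'
    assume ij: "i < length ws" "j < 6" "i' < length ws" "j' < 6"
      and sel: "ws ! i ! j \<and> ws ! i' ! j' \<and> (i, j) \<noteq> (i', j')"
    then have "hex_edge d i j \<inter> hex_edge d i' j' = {}"
      using disjoint hex_edge_in_selected_edges_iff[OF d] hex_edge_eq_iff[OF d] by simp
    then show "\<not> hex_edges_touch d i j i' j'"
      using hex_edges_meet_iff[OF d ij(2,4)] by blast
  qed
next
  assume indep: "independent_selection d ws"
  have "e \<inter> f = {}" if sel: "e \<in> selected_edges d ws" "f \<in> selected_edges d ws" and "e \<noteq> f"
    for e f
  proof -
    obtain i j i' j' where e: "e = hex_edge d i j" "i < length ws" "j < 6" "ws ! i ! j"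
      and f: "f = hex_edge d i' j'" "i' < length ws" "j' < 6" "ws ! i' ! j'"
      using sel unfolding selected_edges_def by blast
    with \<open>e \<noteq> f\<close> indep have "\<not> hex_edges_touch d i j i' j'"
      unfolding independent_selection_def by blast
    with e f show ?thesis
      using hex_edges_meet_iff[OF d e(3) f(3)] by blast
  qed
  then show "is_matching (chain_cactus d (length ws)) (selected_edges d ws)"
    unfolding is_matching_def selected_edges_def chain_cactus_eq by blast
qed

lemma selected_edges_dominating_iff:
  assumes d: "d \<in> {1..5}"
  shows "(\<forall>e\<in>chain_cactus d (length ws) - selected_edges d ws. \<exists>f\<in>selected_edges d ws. e \<inter> f \<noteq> {})
    \<longleftrightarrow> dominating_selection d ws"
proof
  assume dom: "\<forall>e\<in>chain_cactus d (length ws) - selected_edges d ws. \<exists>f\<in>selected_edges d ws. e \<inter> f \<noteq> {}"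
  show "dominating_selection d ws"
    unfolding dominating_selection_def
  proof (intro allI impI)
    fix i j assume ij: "i < length ws" "j < 6" "\<not> ws ! i ! j"
    then have "hex_edge d i j \<in> chain_cactus d (length ws) - selected_edges d ws"
      using hex_edge_in_selected_edges_iff[OF d] unfolding chain_cactus_eq by blast
    then obtain f where "f \<in> selected_edges d ws" "hex_edge d i j \<inter> f \<noteq> {}"
      using dom by blast
    then obtain i' j' where "i' < length ws" "j' < 6" "ws ! i' ! j'" "hex_edge d i j \<inter> hex_edge d i' j' \<noteq> {}"
      unfolding selected_edges_def by blast
    then show "\<exists>i'<length ws. \<exists>j'<6. ws ! i' ! j' \<and> hex_edges_touch d i j i' j'"
      using hex_edges_meet_iff[OF d ij(2)] by blast
  qed
next
  assume dom: "dominating_selection d ws"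
  show "\<forall>e\<in>chain_cactus d (length ws) - selected_edges d ws. \<exists>f\<in>selected_edges d ws. e \<inter> f \<noteq> {}"
  proof
    fix e assume e: "e \<in> chain_cactus d (length ws) - selected_edges d ws"
    then obtain i j where ij: "e = hex_edge d i j" "i < length ws" "j < 6"
      unfolding chain_cactus_eq by blast
    with e have "\<not> ws ! i ! j"
      using hex_edge_in_selected_edges_iff[OF d] by blast
    then obtain i' j' where i'j': "i' < length ws" "j' < 6" "ws ! i' ! j'" "hex_edges_touch d i j i' j'"
      using dom ij unfolding dominating_selection_def by blast
    then have "hex_edge d i' j' \<in> selected_edges d ws" "e \<inter> hex_edge d i' j' \<noteq> {}"
      using ij hex_edge_in_selected_edges_iff[OF d] hex_edges_meet_iff[OF d ij(3) i'j'(2)] by auto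
    then show "\<exists>f\<in>selected_edges d ws. e \<inter> f \<noteq> {}"
      by blast
  qed
qed

lemma is_maximal_matching_selected_edges_iff:
  assumes d: "d \<in> {1..5}"
  shows "is_maximal_matching (chain_cactus d (length ws)) (selected_edges d ws)
    \<longleftrightarrow> independent_selection d ws \<and> dominating_selection d ws"
  by (simp only: is_maximal_matching_iff is_matching_selected_edges_iff[OF d]
      selected_edges_dominating_iff[OF d])

definition covers_left :: "bool list \<Rightarrow> bool" where
  "covers_left w \<longleftrightarrow> w ! 5 \<or> w ! 0"

definition covers_right :: "nat \<Rightarrow> bool list \<Rightarrow> bool" where
  "covers_right d w \<longleftrightarrow> w ! (d - 1) \<or> w ! d"

text \<open>The flags left and right say that the cut vertex at position 0, resp. d, is covered by an
  edge of the previous, resp. next, hexagon.\<close>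

definition hexagon_ok :: "nat \<Rightarrow> bool \<Rightarrow> bool \<Rightarrow> bool list \<Rightarrow> bool" where
  "hexagon_ok d left right w \<longleftrightarrow> (\<forall>j<6. \<not> (w ! j \<and> w ! ((j + 1) mod 6))) \<and>
     (\<forall>j<6. \<not> w ! j \<longrightarrow> w ! ((j + 5) mod 6) \<or> w ! ((j + 1) mod 6)
        \<or> (left \<and> (j = 5 \<or> j = 0)) \<or> (right \<and> (j = d - 1 \<or> j = d)))"

definition left_covered :: "bool list list \<Rightarrow> bool" where
  "left_covered ws \<longleftrightarrow> ws \<noteq> [] \<and> covers_left (hd ws)"

fun chain_ok :: "nat \<Rightarrow> bool \<Rightarrow> bool list list \<Rightarrow> bool" where
  "chain_ok d left [] \<longleftrightarrow> True"
| "chain_ok d left (w # ws) \<longleftrightarrow> hexagon_ok d left (left_covered ws) w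
     \<and> \<not> (covers_right d w \<and> left_covered ws) \<and> chain_ok d (covers_right d w) ws"

lemma independent_selection_iff:
  assumes d: "d \<in> {1..5}"
  shows "independent_selection d ws \<longleftrightarrow> (\<forall>i<length ws. \<forall>j<6. \<not> (ws ! i ! j \<and> ws ! i ! ((j + 1) mod 6)))
     \<and> (\<forall>i. Suc i < length ws \<longrightarrow> \<not> (covers_right d (ws ! i) \<and> covers_left (ws ! Suc i)))"
proof
  assume indep: "independent_selection d ws"
  have "\<not> (ws ! i ! j \<and> ws ! i ! ((j + 1) mod 6))" if "i < length ws" "j < 6" for i j
  proof -
    have "(j + 1) mod 6 < 6" "(j + 1) mod 6 \<noteq> j"
      using \<open>j < 6\<close> by presburger+
    with indep that show ?thesis
      unfolding independent_selection_def hex_edges_touch_def by blast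
  qed
  moreover have "\<not> (covers_right d (ws ! i) \<and> covers_left (ws ! Suc i))" if "Suc i < length ws" for i
  proof
    assume "covers_right d (ws ! i) \<and> covers_left (ws ! Suc i)"
    then obtain j j' where j: "j = d - 1 \<or> j = d" "ws ! i ! j" and j': "j' = 5 \<or> j' = 0" "ws ! Suc i ! j'"
      unfolding covers_left_def covers_right_def by blast
    moreover have "j < 6" "j' < 6"
      using d j(1) j'(1) by auto
    ultimately have "\<not> hex_edges_touch d i j (Suc i) j'"
      using indep that unfolding independent_selection_def by simp
    with j j' show False
      unfolding hex_edges_touch_def by blast
  qed
  ultimately show "(\<forall>i<length ws. \<forall>j<6. \<not> (ws ! i ! j \<and> ws ! i ! ((j + 1) mod 6)))
     \<and> (\<forall>i. Suc i < length ws \<longrightarrow> \<not> (covers_right d (ws ! i) \<and> covers_left (ws ! Suc i)))"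
    by blast
next
  assume "(\<forall>i<length ws. \<forall>j<6. \<not> (ws ! i ! j \<and> ws ! i ! ((j + 1) mod 6)))
     \<and> (\<forall>i. Suc i < length ws \<longrightarrow> \<not> (covers_right d (ws ! i) \<and> covers_left (ws ! Suc i)))"
  then have inner: "\<And>i j. i < length ws \<Longrightarrow> j < 6 \<Longrightarrow> \<not> (ws ! i ! j \<and> ws ! i ! ((j + 1) mod 6))"
    and across: "\<And>i. Suc i < length ws \<Longrightarrow> \<not> (covers_right d (ws ! i) \<and> covers_left (ws ! Suc i))"
    by blast+
  show "independent_selection d ws"
    unfolding independent_selection_def hex_edges_touch_def
    using inner across unfolding covers_left_def covers_right_def by fastforce
qed

lemma dominating_selection_iff:
  assumes d: "d \<in> {1..5}"
  shows "dominating_selection d ws \<longleftrightarrow> (\<forall>i<length ws. \<forall>j<6. \<not> ws ! i ! j \<longrightarrow>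
     ws ! i ! ((j + 5) mod 6) \<or> ws ! i ! ((j + 1) mod 6)
     \<or> (0 < i \<and> covers_right d (ws ! (i - 1)) \<and> (j = 5 \<or> j = 0))
     \<or> (Suc i < length ws \<and> covers_left (ws ! Suc i) \<and> (j = d - 1 \<or> j = d)))"
    (is "_ \<longleftrightarrow> (\<forall>i<length ws. \<forall>j<6. \<not> ws ! i ! j \<longrightarrow> ?local i j)")
proof
  assume dom: "dominating_selection d ws"
  show "\<forall>i<length ws. \<forall>j<6. \<not> ws ! i ! j \<longrightarrow> ?local i j"
  proof (intro allI impI)
    fix i j assume ij: "i < length ws" "j < 6" "\<not> ws ! i ! j"
    then obtain i' j' where i'j': "i' < length ws" "j' < 6" "ws ! i' ! j'" "hex_edges_touch d i j i' j'"
      using dom unfolding dominating_selection_def by blast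
    from i'j'(4) consider
        (same) "i' = i" "j' = j \<or> j' = (j + 1) mod 6 \<or> j = (j' + 1) mod 6"
      | (following) "i' = Suc i" "j = d - 1 \<or> j = d" "j' = 5 \<or> j' = 0"
      | (preceding) "i = Suc i'" "j' = d - 1 \<or> j' = d" "j = 5 \<or> j = 0"
      unfolding hex_edges_touch_def by blast
    then show "?local i j"
    proof cases
      case same
      moreover have "j = (j' + 1) mod 6 \<Longrightarrow> j' = (j + 5) mod 6"
        using i'j'(2) by presburger
      ultimately show ?thesis
        using ij i'j' by auto
    qed (use i'j' in \<open>auto simp: covers_left_def covers_right_def\<close>)
  qed
next
  assume local: "\<forall>i<length ws. \<forall>j<6. \<not> ws ! i ! j \<longrightarrow> ?local i j"
  show "dominating_selection d ws"
    unfolding dominating_selection_def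
  proof (intro allI impI)
    fix i j assume ij: "i < length ws" "j < 6" "\<not> ws ! i ! j"
    have mod6: "(j + 1) mod 6 < 6" "(j + 5) mod 6 < 6" "((j + 5) mod 6 + 1) mod 6 = j"
      using ij(2) by presburger+
    from local ij consider
        (pred) "ws ! i ! ((j + 5) mod 6)"
      | (succ) "ws ! i ! ((j + 1) mod 6)"
      | (preceding) j' where "0 < i" "j' = d - 1 \<or> j' = d" "ws ! (i - 1) ! j'" "j = 5 \<or> j = 0"
      | (following) j' where "Suc i < length ws" "j' = 5 \<or> j' = 0" "ws ! Suc i ! j'" "j = d - 1 \<or> j = d"
      unfolding covers_left_def covers_right_def by blast
    then show "\<exists>i'<length ws. \<exists>j'<6. ws ! i' ! j' \<and> hex_edges_touch d i j i' j'"
    proof cases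
      case pred
      have "hex_edges_touch d i j i ((j + 5) mod 6)"
        using mod6 unfolding hex_edges_touch_def by simp
      with ij(1) mod6(2) pred show ?thesis
        by blast
    next
      case succ
      have "hex_edges_touch d i j i ((j + 1) mod 6)"
        unfolding hex_edges_touch_def by simp
      with ij(1) mod6(1) succ show ?thesis
        by blast
    next
      case (preceding j')
      then have "hex_edges_touch d i j (i - 1) j'"
        unfolding hex_edges_touch_def by auto
      moreover have "i - 1 < length ws" "j' < 6"
        using ij preceding d by auto
      ultimately show ?thesis
        using preceding by blast
    next
      case (following j')
      then have "hex_edges_touch d i j (Suc i) j'"
        unfolding hex_edges_touch_def by auto
      moreover have "j' < 6"
        using following by auto
      ultimately show ?thesis
        using following by blast
    qed
  qed
qed

lemma chain_ok_iff_nth: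
  "chain_ok d left ws \<longleftrightarrow>
     (\<forall>i<length ws. hexagon_ok d (if i = 0 then left else covers_right d (ws ! (i - 1)))
        (Suc i < length ws \<and> covers_left (ws ! Suc i)) (ws ! i))
   \<and> (\<forall>i. Suc i < length ws \<longrightarrow> \<not> (covers_right d (ws ! i) \<and> covers_left (ws ! Suc i)))"
    (is "_ \<longleftrightarrow> (\<forall>i<length ws. ?hexagons left ws i) \<and> (\<forall>i. ?junctions ws i)")
proof (induction ws arbitrary: left)
  case (Cons w ws)
  have "(\<forall>i<length (w # ws). ?hexagons left (w # ws) i)
    \<longleftrightarrow> hexagon_ok d left (left_covered ws) w \<and> (\<forall>i<length ws. ?hexagons (covers_right d w) ws i)"
    unfolding length_Cons All_less_Suc2 by (cases ws) (simp_all add: left_covered_def nth_Cons')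
  moreover have "(\<forall>i. ?junctions (w # ws) i)
    \<longleftrightarrow> \<not> (covers_right d w \<and> left_covered ws) \<and> (\<forall>i. ?junctions ws i)"
    by (auto simp: left_covered_def hd_conv_nth nth_Cons split: nat.split)
  ultimately show ?case
    using Cons.IH[of "covers_right d w"] by auto
qed simp

lemma is_maximal_matching_selected_edges_iff_chain_ok:
  assumes d: "d \<in> {1..5}"
  shows "is_maximal_matching (chain_cactus d (length ws)) (selected_edges d ws) \<longleftrightarrow> chain_ok d False ws"
proof -
  have if_zero: "(if i = 0 then False else P) \<longleftrightarrow> 0 < i \<and> P" for i :: nat and P
    by simp
  show ?thesis
    unfolding is_maximal_matching_selected_edges_iff[OF d] independent_selection_iff[OF d]
      dominating_selection_iff[OF d] chain_ok_iff_nth hexagon_ok_def if_zero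
    by blast
qed

lemma num_max_matchings_eq_card_chain_ok:
  assumes d: "d \<in> {1..5}"
  shows "num_max_matchings (chain_cactus d n) = card {ws \<in> selections n. chain_ok d False ws}"
proof -
  let ?E = "chain_cactus d n"
  have "bij_betw (selected_edges d) {ws \<in> selections n. chain_ok d False ws}
    {M \<in> Pow ?E. is_maximal_matching ?E M}"
    by (rule bij_betw_Collect[OF bij_betw_selected_edges[OF d]])
      (auto simp: selections_def is_maximal_matching_selected_edges_iff_chain_ok[OF d])
  moreover have "{M \<in> Pow ?E. is_maximal_matching ?E M} = {M. is_maximal_matching ?E M}"
    by (auto simp: is_maximal_matching_def is_matching_def)
  ultimately show ?thesis
    unfolding num_max_matchings_def by (simp add: bij_betw_same_card)
qed

text \<open>The state of a chain is the pair (left, covered): whether its left cut vertex is covered from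
  outside, and whether its first hexagon covers it itself.\<close>

definition chain_selections :: "nat \<Rightarrow> bool \<Rightarrow> bool \<Rightarrow> nat \<Rightarrow> bool list list set" where
  "chain_selections d left covered m = {ws \<in> selections m. chain_ok d left ws \<and> left_covered ws = covered}"

definition transfer_hexagons :: "nat \<Rightarrow> bool \<Rightarrow> bool \<Rightarrow> bool \<Rightarrow> bool \<Rightarrow> bool list set" where
  "transfer_hexagons d left covered left' covered' = {w \<in> hexagon_words. covers_left w = covered
     \<and> covers_right d w = left' \<and> \<not> (left' \<and> covered') \<and> hexagon_ok d left covered' w}"

lemma chain_selections_0: "chain_selections d left covered 0 = (if covered then {} else {[]})"
  by (auto simp: chain_selections_def selections_def left_covered_def)

lemma chain_selections_Suc:
  "chain_selections d left covered (Suc m) = (\<Union>(left', covered')\<in>UNIV.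
     (\<lambda>(w, ws). w # ws) ` (transfer_hexagons d left covered left' covered' \<times> chain_selections d left' covered' m))"
proof (intro subset_antisym subsetI)
  fix ws assume "ws \<in> chain_selections d left covered (Suc m)"
  then obtain w ws' where "ws = w # ws'" "w \<in> hexagon_words" "ws' \<in> selections m"
    "chain_ok d left (w # ws')" "covers_left w = covered"
    by (auto simp: chain_selections_def selections_def left_covered_def length_Suc_conv)
  then have "(w, ws') \<in> transfer_hexagons d left covered (covers_right d w) (left_covered ws')
      \<times> chain_selections d (covers_right d w) (left_covered ws') m"
    by (simp add: transfer_hexagons_def chain_selections_def)
  with \<open>ws = w # ws'\<close> show "ws \<in> (\<Union>(left', covered')\<in>UNIV.
     (\<lambda>(w, ws). w # ws) ` (transfer_hexagons d left covered left' covered' \<times> chain_selections d left' covered' m))"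
    by blast
qed (auto simp: chain_selections_def transfer_hexagons_def selections_def left_covered_def)

lemma finite_chain_selections: "finite (chain_selections d left covered m)"
  using finite_selections unfolding chain_selections_def by simp

lemma card_chain_selections_Suc:
  "card (chain_selections d left covered (Suc m)) = (\<Sum>(left', covered')\<in>UNIV.
     card (transfer_hexagons d left covered left' covered') * card (chain_selections d left' covered' m))"
proof -
  define piece where "piece = (\<lambda>(left', covered'). (\<lambda>(w, ws). w # ws) `
    (transfer_hexagons d left covered left' covered' \<times> chain_selections d left' covered' m))"
  have card_piece: "card (piece p) = (case p of (left', covered') \<Rightarrow>
      card (transfer_hexagons d left covered left' covered') * card (chain_selections d left' covered' m))"
    for p
  proof (cases p)
    case (Pair left' covered')
    have "inj_on (\<lambda>(w, ws). w # ws)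
        (transfer_hexagons d left covered left' covered' \<times> chain_selections d left' covered' m)"
      by (auto intro: inj_onI)
    then show ?thesis
      unfolding piece_def Pair by (simp add: card_image card_cartesian_product)
  qed
  have "card (chain_selections d left covered (Suc m)) = card (\<Union>p\<in>UNIV. piece p)"
    unfolding chain_selections_Suc piece_def ..
  also have "\<dots> = (\<Sum>p\<in>UNIV. card (piece p))"
  proof (rule card_UN_disjoint)
    show "\<forall>p\<in>UNIV. finite (piece p)"
      using finite_hexagon_words finite_chain_selections
      by (auto simp: piece_def transfer_hexagons_def)
    show "\<forall>p\<in>UNIV. \<forall>q\<in>UNIV. p \<noteq> q \<longrightarrow> piece p \<inter> piece q = {}"
      by (auto simp: piece_def transfer_hexagons_def chain_selections_def)
  qed simp
  finally show ?thesis
    by (simp only: card_piece)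
qed

lemma num_max_matchings_chain_cactus:
  assumes d: "d \<in> {1..5}"
  shows "num_max_matchings (chain_cactus d n)
    = card (chain_selections d False False n) + card (chain_selections d False True n)"
proof -
  have "{ws \<in> selections n. chain_ok d False ws}
      = chain_selections d False False n \<union> chain_selections d False True n"
    by (auto simp: chain_selections_def)
  moreover have "chain_selections d False False n \<inter> chain_selections d False True n = {}"
    by (auto simp: chain_selections_def)
  ultimately show ?thesis
    using num_max_matchings_eq_card_chain_ok[OF d] finite_chain_selections
    by (simp add: card_Un_disjoint)
qed

lemma hexagon_words_eq_n_lists: "hexagon_words = set (List.n_lists 6 [True, False])"
  unfolding hexagon_words_def set_n_lists by auto

lemma card_transfer_hexagons_code:
  "card (transfer_hexagons d left covered left' covered') = length (filter (\<lambda>w. covers_left w = covered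
     \<and> covers_right d w = left' \<and> \<not> (left' \<and> covered') \<and> hexagon_ok d left covered' w)
     (List.n_lists 6 [True, False]))"
proof -
  have "transfer_hexagons d left covered left' covered' = set (filter (\<lambda>w. covers_left w = covered
     \<and> covers_right d w = left' \<and> \<not> (left' \<and> covered') \<and> hexagon_ok d left covered' w)
     (List.n_lists 6 [True, False]))"
    unfolding transfer_hexagons_def hexagon_words_eq_n_lists by auto
  moreover have "distinct (List.n_lists 6 [True, False])"
    by (simp add: distinct_n_lists)
  ultimately show ?thesis
    using distinct_card distinct_filter by metis
qed

lemma sum_bool_pairs: "(\<Sum>(a, b)\<in>UNIV. f a b) = f False False + f False True + f True False + f True True"
  for f :: "bool \<Rightarrow> bool \<Rightarrow> 'a::comm_monoid_add"
  by (simp add: UNIV_Times_UNIV[symmetric] UNIV_bool add.assoc del: UNIV_Times_UNIV)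

lemma transfer_hexagons_True_True: "transfer_hexagons d left covered True True = {}"
  by (simp add: transfer_hexagons_def)

text \<open>Rows and columns are indexed by the states (False, False), (False, True), (True, False);
  the state (True, True) is never entered.\<close>

lemma para_transfer_matrix:
  "[[card (transfer_hexagons 3 l c l' c'). (l', c') \<leftarrow> [(False, False), (False, True), (True, False)]].
     (l, c) \<leftarrow> [(False, False), (False, True), (True, False)]] = [[1, 1, 0], [0, 2, 4], [1, 1, 2]]"
  unfolding card_transfer_hexagons_code by code_simp

lemma meta_transfer_matrix:
  "[[card (transfer_hexagons 2 l c l' c'). (l', c') \<leftarrow> [(False, False), (False, True), (True, False)]].
     (l, c) \<leftarrow> [(False, False), (False, True), (True, False)]] = [[0, 0, 1], [1, 3, 3], [0, 2, 3]]"
  unfolding card_transfer_hexagons_code by code_simp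

lemma ortho_transfer_matrix:
  "[[card (transfer_hexagons 1 l c l' c'). (l', c') \<leftarrow> [(False, False), (False, True), (True, False)]].
     (l, c) \<leftarrow> [(False, False), (False, True), (True, False)]] = [[0, 1, 1], [1, 2, 3], [1, 2, 2]]"
  unfolding card_transfer_hexagons_code by code_simp

lemma pseq_eq: "pseq n = int (card (chain_selections 3 False False n) + card (chain_selections 3 False True n))"
  by (simp add: pseq_def num_max_matchings_chain_cactus chain_selections_0)

lemma mseq_eq: "mseq n = int (card (chain_selections 2 False False n) + card (chain_selections 2 False True n))"
  by (simp add: mseq_def num_max_matchings_chain_cactus chain_selections_0)

lemma oseq_eq: "oseq n = int (card (chain_selections 1 False False n) + card (chain_selections 1 False True n))"
  by (simp add: oseq_def num_max_matchings_chain_cactus chain_selections_0)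

lemma para_chain_selections_Suc:
  "card (chain_selections 3 False False (Suc m))
    = card (chain_selections 3 False False m) + card (chain_selections 3 False True m)"
  "card (chain_selections 3 False True (Suc m))
    = 2 * card (chain_selections 3 False True m) + 4 * card (chain_selections 3 True False m)"
  "card (chain_selections 3 True False (Suc m)) = card (chain_selections 3 False False m)
    + card (chain_selections 3 False True m) + 2 * card (chain_selections 3 True False m)"
  using para_transfer_matrix
  by (simp_all add: card_chain_selections_Suc sum_bool_pairs transfer_hexagons_True_True)

lemma meta_chain_selections_Suc:
  "card (chain_selections 2 False False (Suc m)) = card (chain_selections 2 True False m)"
  "card (chain_selections 2 False True (Suc m)) = card (chain_selections 2 False False m)
    + 3 * card (chain_selections 2 False True m) + 3 * card (chain_selections 2 True False m)"
  "card (chain_selections 2 True False (Suc m))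
    = 2 * card (chain_selections 2 False True m) + 3 * card (chain_selections 2 True False m)"
  using meta_transfer_matrix
  by (simp_all add: card_chain_selections_Suc sum_bool_pairs transfer_hexagons_True_True)

lemma ortho_chain_selections_Suc:
  "card (chain_selections 1 False False (Suc m))
    = card (chain_selections 1 False True m) + card (chain_selections 1 True False m)"
  "card (chain_selections 1 False True (Suc m)) = card (chain_selections 1 False False m)
    + 2 * card (chain_selections 1 False True m) + 3 * card (chain_selections 1 True False m)"
  "card (chain_selections 1 True False (Suc m)) = card (chain_selections 1 False False m)
    + 2 * card (chain_selections 1 False True m) + 2 * card (chain_selections 1 True False m)"
  using ortho_transfer_matrix
  by (simp_all add: card_chain_selections_Suc sum_bool_pairs transfer_hexagons_True_True)

lemma pseq_initial: "pseq 0 = 1 \<and> pseq 1 = 5 \<and> pseq 2 = 25"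
  using para_chain_selections_Suc[of 0] para_chain_selections_Suc[of 1]
  by (simp add: pseq_eq numeral_2_eq_2 chain_selections_0)

lemma mseq_initial: "mseq 0 = 1 \<and> mseq 1 = 5 \<and> mseq 2 = 25"
  using meta_chain_selections_Suc[of 0] meta_chain_selections_Suc[of 1]
  by (simp add: mseq_eq numeral_2_eq_2 chain_selections_0)

lemma oseq_initial: "oseq 0 = 1 \<and> oseq 1 = 5 \<and> oseq 2 = 25"
  using ortho_chain_selections_Suc[of 0] ortho_chain_selections_Suc[of 1]
  by (simp add: oseq_eq numeral_2_eq_2 chain_selections_0)

lemma pseq_recurrence:
  "pseq (Suc (Suc (Suc m))) = 5 * pseq (Suc (Suc m)) - 4 * pseq (Suc m) + 4 * pseq m"
  using para_chain_selections_Suc by (simp add: pseq_eq)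

lemma mseq_recurrence:
  "mseq (Suc (Suc (Suc m))) = 6 * mseq (Suc (Suc m)) - 3 * mseq (Suc m) + 2 * mseq m"
  using meta_chain_selections_Suc by (simp add: mseq_eq)

lemma oseq_recurrence:
  "oseq (Suc (Suc (Suc m))) = 4 * oseq (Suc (Suc m)) + 4 * oseq (Suc m) + oseq m"
  using ortho_chain_selections_Suc by (simp add: oseq_eq)

theorem corollary3p5:
  shows "(pseq 0 = 1 \<and> pseq 1 = 5 \<and> pseq 2 = 25 \<and>
          (\<forall>n\<ge>3. pseq n = 5 * pseq (n - 1) - 4 * pseq (n - 2) + 4 * pseq (n - 3)))
       \<and> (mseq 0 = 1 \<and> mseq 1 = 5 \<and> mseq 2 = 25 \<and>
          (\<forall>n\<ge>3. mseq n = 6 * mseq (n - 1) - 3 * mseq (n - 2) + 2 * mseq (n - 3)))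
       \<and> (oseq 0 = 1 \<and> oseq 1 = 5 \<and> oseq 2 = 25 \<and>
          (\<forall>n\<ge>3. oseq n = 4 * oseq (n - 1) + 4 * oseq (n - 2) + oseq (n - 3)))"
proof -
  have from_3: "\<forall>n\<ge>3. P n" if "\<And>m. P (Suc (Suc (Suc m)))" for P :: "nat \<Rightarrow> bool"
  proof (intro allI impI)
    fix n :: nat assume "3 \<le> n"
    then have "n = Suc (Suc (Suc (n - 3)))"
      by simp
    with that show "P n"
      by metis
  qed
  have "\<forall>n\<ge>3. pseq n = 5 * pseq (n - 1) - 4 * pseq (n - 2) + 4 * pseq (n - 3)"
    by (rule from_3) (simp add: pseq_recurrence)
  moreover have "\<forall>n\<ge>3. mseq n = 6 * mseq (n - 1) - 3 * mseq (n - 2) + 2 * mseq (n - 3)"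
    by (rule from_3) (simp add: mseq_recurrence)
  moreover have "\<forall>n\<ge>3. oseq n = 4 * oseq (n - 1) + 4 * oseq (n - 2) + oseq (n - 3)"
    by (rule from_3) (simp add: oseq_recurrence)
  ultimately show ?thesis
    using pseq_initial mseq_initial oseq_initial by blast
qed

end
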